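(* Let $R$ be a finite commutative principal ideal ring with canonical decomposition $R\cong\prod_{i=1}^kR_i$, where $R_i$ has residue field $\mathbb F_{q_i}$, and let $n$ be a positive integer with $\gcd(n,q_i)=1$ for all $i$. Let $C=\mathrm{CRT}(C_1,\dots,C_k)$ be a cyclic code of length $n$ over $R$. If there exists $i$ such that $q_i$ is odd and $C_i$ is a free $R_i$-module, then $C$ is not self-dual.
   Context: All rings are finite, commutative, with identity. $R_i=R/\mathfrak m_i^{t_i}$ are finite chain rings ($\mathfrak m_i$ the maximal ideals of $R$, $t_i$ their indices of stability), $\psi_i:R\to R_i$ the canonical projections extended coordinatewise, and $\mathrm{CRT}(C_1,\dots,C_k)=\{u\in R^n:\psi_i(u)\in C_i\ \forall i\}$; the components $C_i=\psi_i(C)$. A code is free if it is a free module. Cyclic: closed under cyclic shift; self-dual: $C=C^\perp$ for $[u,v]=\sum u_jv_j$. *)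

theory Defs
  imports "HOL-Algebra.Ideal_Product" "HOL-Algebra.QuotRing" "HOL-Library.FuncSet"
begin

definition vecs :: "('a, 'b) ring_scheme \<Rightarrow> nat \<Rightarrow> 'a list set" where
  "vecs S n = {u. length u = n \<and> set u \<subseteq> carrier S}"

definition vadd :: "('a, 'b) ring_scheme \<Rightarrow> 'a list \<Rightarrow> 'a list \<Rightarrow> 'a list" where
  "vadd S u v = map2 (\<lambda>x y. x \<oplus>\<^bsub>S\<^esub> y) u v"

definition vsmult :: "('a, 'b) ring_scheme \<Rightarrow> 'a \<Rightarrow> 'a list \<Rightarrow> 'a list" where
  "vsmult S r u = map (\<lambda>x. r \<otimes>\<^bsub>S\<^esub> x) u"

definition lin_code :: "('a, 'b) ring_scheme \<Rightarrow> nat \<Rightarrow> 'a list set \<Rightarrow> bool" where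
  "lin_code S n C \<longleftrightarrow> C \<subseteq> vecs S n \<and> C \<noteq> {} \<and>
     (\<forall>u\<in>C. \<forall>v\<in>C. vadd S u v \<in> C) \<and>
     (\<forall>r\<in>carrier S. \<forall>u\<in>C. vsmult S r u \<in> C)"

definition cshift :: "'a list \<Rightarrow> 'a list" where
  "cshift u = (if u = [] then [] else last u # butlast u)"

definition cyclic_code :: "('a, 'b) ring_scheme \<Rightarrow> nat \<Rightarrow> 'a list set \<Rightarrow> bool" where
  "cyclic_code S n C \<longleftrightarrow> lin_code S n C \<and> (\<forall>u\<in>C. cshift u \<in> C)"

definition inner :: "('a, 'b) ring_scheme \<Rightarrow> nat \<Rightarrow> 'a list \<Rightarrow> 'a list \<Rightarrow> 'a" where
  "inner S n u v = (\<Oplus>\<^bsub>S\<^esub> j\<in>{..<n}. u ! j \<otimes>\<^bsub>S\<^esub> v ! j)"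

definition dual_code :: "('a, 'b) ring_scheme \<Rightarrow> nat \<Rightarrow> 'a list set \<Rightarrow> 'a list set" where
  "dual_code S n C = {v \<in> vecs S n. \<forall>u\<in>C. inner S n u v = \<zero>\<^bsub>S\<^esub>}"

definition ideal_pow :: "('a, 'b) ring_scheme \<Rightarrow> 'a set \<Rightarrow> nat \<Rightarrow> 'a set" where
  "ideal_pow S I t = I [^]\<^bsub>ideals_set S\<^esub> t"

definition stab_index :: "('a, 'b) ring_scheme \<Rightarrow> 'a set \<Rightarrow> nat" where
  "stab_index S I = (LEAST t. ideal_pow S I t = ideal_pow S I (Suc t))"

definition psi :: "('a, 'b) ring_scheme \<Rightarrow> 'a set \<Rightarrow> 'a list \<Rightarrow> 'a set list" where
  "psi S I u = map (\<lambda>x. I +>\<^bsub>S\<^esub> x) u"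

text \<open>The component of C at the maximal ideal m: psi_m(C), a code over R/m^t.\<close>
definition component :: "('a, 'b) ring_scheme \<Rightarrow> 'a set \<Rightarrow> 'a list set \<Rightarrow> 'a set list set" where
  "component S m C = psi S (ideal_pow S m (stab_index S m)) ` C"

definition lincomb :: "('a, 'b) ring_scheme \<Rightarrow> nat \<Rightarrow> ('a list \<Rightarrow> 'a) \<Rightarrow> 'a list set \<Rightarrow> 'a list" where
  "lincomb S n f B = map (\<lambda>j. \<Oplus>\<^bsub>S\<^esub> b\<in>B. f b \<otimes>\<^bsub>S\<^esub> b ! j) [0..<n]"

definition free_code :: "('a, 'b) ring_scheme \<Rightarrow> nat \<Rightarrow> 'a list set \<Rightarrow> bool" where
  "free_code S n M \<longleftrightarrow> (\<exists>B. finite B \<and> B \<subseteq> M \<and>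
     (\<forall>v\<in>M. \<exists>!f. f \<in> B \<rightarrow>\<^sub>E carrier S \<and> v = lincomb S n f B))"

definition finite_cpir :: "('a, 'b) ring_scheme \<Rightarrow> bool" where
  "finite_cpir S \<longleftrightarrow> cring S \<and> finite (carrier S) \<and> (\<forall>I. ideal I S \<longrightarrow> principalideal I S)"

end

theory Submission
  imports Defs
begin

text \<open>Suppose \<open>C = C\<^sup>\<perp>\<close>. For the maximal ideal \<open>m\<close> of the statement, \<open>I = m\<^sup>t\<close> is an idempotent
  principal ideal, hence has an identity element \<open>e\<close>. If a constant word \<open>(a,\<dots>,a)\<close> lies in \<open>C\<close>
  and is orthogonal to \<open>C\<close>, then every coordinate sum \<open>s\<close> of a codeword kills \<open>a\<close>, so \<open>s\<close> kills
  all coordinates of \<open>\<psi>(a,\<dots>,a)\<close> with respect to a basis of the free code \<open>\<psi>(C)\<close>; as the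
  coordinate sum \<open>n\<cdot>\<psi>(a)\<close> of \<open>\<psi>(a,\<dots>,a)\<close> is a combination of coordinate sums of basis words,
  \<open>n\<cdot>a \<in> I\<close>. Cyclicity makes \<open>(c,\<dots>,c)\<close> a codeword for every coordinate sum \<open>c\<close> of a codeword,
  so \<open>n\<cdot>c \<in> I\<close> and \<open>c\<cdot>n(1 - e) = 0\<close>; thus \<open>x = n(1 - e)\<close> gives a constant word of \<open>C\<^sup>\<perp> = C\<close>,
  whence \<open>n\<^sup>2(1 - e) \<in> I\<close>. Together with \<open>n\<^sup>2 e \<in> I\<close> this puts \<open>n\<^sup>2\<close> into \<open>I \<subseteq> m\<close>, contradicting
  \<open>gcd(n, |R/m|) = 1\<close>.\<close>

section \<open>Powers of an ideal\<close>

context cring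
begin

lemma ideal_pow_0 [simp]: "ideal_pow R I 0 = carrier R"
  by (simp add: ideal_pow_def ideals_set_def)

lemma ideal_pow_Suc: "ideal_pow R I (Suc k) = ideal_pow R I k \<cdot> I"
  by (simp add: ideal_pow_def ideals_set_def)

lemma ideal_ideal_pow: "ideal I R \<Longrightarrow> ideal (ideal_pow R I k) R"
  by (induct k) (auto simp: ideal_pow_Suc ideal_prod_is_ideal oneideal)

lemma ideal_pow_Suc_subset: "ideal I R \<Longrightarrow> ideal_pow R I (Suc k) \<subseteq> ideal_pow R I k"
  using ideal_prod_inter[OF ideal_ideal_pow] by (auto simp: ideal_pow_Suc)

lemma ideal_pow_subset: "ideal I R \<Longrightarrow> k \<ge> 1 \<Longrightarrow> ideal_pow R I k \<subseteq> I"
  by (cases k) (use ideal_prod_inter[OF ideal_ideal_pow] in \<open>auto simp: ideal_pow_Suc\<close>)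

lemma ideal_pow_1: "ideal I R \<Longrightarrow> ideal_pow R I 1 = I"
  using ideal_prod_commute[OF oneideal, of I] ideal_prod_one[of I]
  by (simp add: ideal_pow_Suc)

lemma ideal_pow_add: "ideal I R \<Longrightarrow> ideal_pow R I (k + l) = ideal_pow R I k \<cdot> ideal_pow R I l"
proof -
  assume "ideal I R"
  interpret M: comm_monoid "ideals_set R" by (rule ideals_set_is_comm_monoid)
  have "I \<in> carrier (ideals_set R)" using \<open>ideal I R\<close> by (simp add: ideals_set_def)
  from M.nat_pow_mult[OF this, of k l, symmetric] show ?thesis
    by (simp add: ideal_pow_def ideals_set_def)
qed

lemma ideal_pow_stab_index:
  assumes "finite (carrier R)" "ideal I R"
  shows "ideal_pow R I (stab_index R I) = ideal_pow R I (Suc (stab_index R I))"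
proof -
  have "\<exists>t. ideal_pow R I t = ideal_pow R I (Suc t)"
  proof (rule ccontr)
    assume "\<not> ?thesis"
    then have strict: "ideal_pow R I (Suc k) \<subset> ideal_pow R I k" for k
      using ideal_pow_Suc_subset[OF assms(2)] by blast
    have finite: "finite (ideal_pow R I k)" for k
      using assms ideal.Icarr[OF ideal_ideal_pow[OF assms(2)]] by (meson finite_subset subsetI)
    have "card (ideal_pow R I k) + k \<le> card (carrier R)" for k
    proof (induct k)
      case (Suc k)
      then show ?case using psubset_card_mono[OF finite strict[of k]] by simp
    qed simp
    from this[of "Suc (card (carrier R))"] show False by linarith
  qed
  then show ?thesis unfolding stab_index_def by (rule LeastI_ex)
qed

lemma stab_index_pos:
  assumes "finite (carrier R)" "maximalideal m R"
  shows "stab_index R m \<ge> 1"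
proof (rule ccontr)
  have "ideal m R" using assms(2) by (rule maximalideal.axioms(1))
  assume "\<not> stab_index R m \<ge> 1"
  then have "stab_index R m = 0" by simp
  then have "carrier R = m"
    using ideal_pow_stab_index[OF assms(1) \<open>ideal m R\<close>] ideal_pow_1[OF \<open>ideal m R\<close>] by simp
  then show False using maximalideal.I_notcarr[OF assms(2)] by simp
qed

lemma ideal_pow_stab_index_idem:
  assumes "finite (carrier R)" "ideal I R"
  defines "J \<equiv> ideal_pow R I (stab_index R I)"
  shows "J = J \<cdot> J"
proof -
  have "ideal_pow R I (stab_index R I + k) = J" for k
  proof (induct k)
    case (Suc k)
    have "ideal_pow R I (stab_index R I + Suc k) = ideal_pow R I (stab_index R I + k) \<cdot> I"
      by (simp add: ideal_pow_Suc)
    also have "\<dots> = ideal_pow R I (Suc (stab_index R I))" by (simp add: Suc J_def ideal_pow_Suc)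
    finally show ?case using ideal_pow_stab_index[OF assms(1,2)] by (simp add: J_def)
  qed (simp add: J_def)
  from this[of "stab_index R I"] show ?thesis
    by (simp add: ideal_pow_add[OF assms(2)] J_def)
qed

lemma idempotent_principalideal_has_unit:
  assumes "principalideal I R" "I = I \<cdot> I"
  shows "\<exists>e\<in>I. \<forall>x\<in>I. x \<otimes> e = x"
proof -
  obtain g where g: "g \<in> carrier R" and I: "I = PIdl g"
    using assms(1) principalideal.generate cgenideal_eq_genideal by metis
  have "\<exists>r\<in>carrier R. s = r \<otimes> (g \<otimes> g)" if "s \<in> (PIdl g) \<cdot> (PIdl g)" for s
    using that
  proof (induct s rule: ideal_prod.induct)
    case (prod i j)
    then obtain x y where "x \<in> carrier R" "y \<in> carrier R" "i = x \<otimes> g" "j = y \<otimes> g"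
      by (auto simp: cgenideal_def)
    then show ?case using g by (intro bexI[of _ "x \<otimes> y"]) (simp_all add: m_ac)
  next
    case (sum s1 s2)
    then obtain r1 r2 where "r1 \<in> carrier R" "r2 \<in> carrier R"
      "s1 = r1 \<otimes> (g \<otimes> g)" "s2 = r2 \<otimes> (g \<otimes> g)"
      by auto
    then show ?case using g by (intro bexI[of _ "r1 \<oplus> r2"]) (simp_all add: l_distr)
  qed
  moreover have "g \<in> (PIdl g) \<cdot> (PIdl g)" using assms(2) I cgenideal_self[OF g] by simp
  ultimately obtain r where r: "r \<in> carrier R" "g = r \<otimes> (g \<otimes> g)" by blast
  have "x \<otimes> (r \<otimes> g) = x" if "x \<in> PIdl g" for x
  proof -
    obtain y where y: "y \<in> carrier R" "x = y \<otimes> g" using \<open>x \<in> PIdl g\<close> by (auto simp: cgenideal_def)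
    have "x \<otimes> (r \<otimes> g) = y \<otimes> (r \<otimes> (g \<otimes> g))" using y r(1) g by (simp add: m_ac)
    also have "\<dots> = x" using r(2) y by simp
    finally show ?thesis .
  qed
  moreover have "r \<otimes> g \<in> PIdl g" using r g by (auto simp: cgenideal_def)
  ultimately show ?thesis using I by blast
qed

end

section \<open>Multiples of the identity\<close>

lemma (in ring) add_pow_one_neq_zero_if_coprime_card:
  assumes "finite (carrier R)" "\<one> \<noteq> \<zero>" "coprime n (card (carrier R))"
  shows "add_pow R n \<one> \<noteq> \<zero>"
proof
  assume zero: "add_pow R n \<one> = \<zero>"
  define q where "q = card (carrier R)"
  have "q \<noteq> 0" using assms(1) by (auto simp: q_def)
  then obtain x y where xy: "q * x = n * y + 1"
    using bezout_nat[of q n] assms(3) by (auto simp: q_def coprime_iff_gcd_eq_1 gcd.commute)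
  have order: "add_pow R q \<one> = \<zero>"
    unfolding q_def by (rule add.power_order_eq_one[OF assms(1)]) simp
  have pow_mult: "add_pow R (k * l) \<one> = add_pow R l (add_pow R k \<one>)" for k l :: nat
    by (simp add: add.nat_pow_pow)
  have "add_pow R (q * x) \<one> = \<zero>" by (simp only: pow_mult order) simp
  moreover have "add_pow R (n * y + 1) \<one> = add_pow R (n * y) \<one> \<oplus> \<one>"
    by (simp add: add.nat_pow_mult[symmetric])
  then have "add_pow R (n * y + 1) \<one> = \<one>" by (simp only: pow_mult zero) simp
  ultimately show False using xy assms(2) by metis
qed

lemma (in cring) add_pow_one_notin_maximalideal:
  assumes "finite (carrier R)" "maximalideal m R" "coprime n (card (carrier (R Quot m)))"
  shows "add_pow R n \<one> \<notin> m"
proof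
  assume mem: "add_pow R n \<one> \<in> m"
  interpret M: maximalideal m R by fact
  define F where "F = R Quot m"
  define h where "h = (+>) m"
  interpret F: field F unfolding F_def by (rule M.quotient_is_field[OF is_cring])
  interpret H: ring_hom_cring R F h
    unfolding F_def h_def by (rule M.rcos_ring_hom_cring[OF is_cring])
  have "carrier F \<subseteq> Pow (carrier R)"
    using M.a_rcosets_part_G by (auto simp: F_def FactRing_def)
  then have "finite (carrier F)"
    using assms(1) by (meson finite_Pow_iff finite_subset)
  then have "add_pow F n \<one>\<^bsub>F\<^esub> \<noteq> \<zero>\<^bsub>F\<^esub>"
    using F.add_pow_one_neq_zero_if_coprime_card assms(3) F.one_not_zero by (simp add: F_def)
  moreover have "h (add_pow R n \<one>) = add_pow F n \<one>\<^bsub>F\<^esub>"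
    by (induct n) simp_all
  moreover have "h (add_pow R n \<one>) = \<zero>\<^bsub>F\<^esub>"
    using M.a_rcos_const[OF mem] by (simp add: h_def F_def FactRing_def)
  ultimately show False by simp
qed

section \<open>Coordinate sums and cyclic codes\<close>

definition coord_sum :: "('a, 'b) ring_scheme \<Rightarrow> nat \<Rightarrow> 'a list \<Rightarrow> 'a" where
  "coord_sum S n u = (\<Oplus>\<^bsub>S\<^esub> j\<in>{..<n}. u ! j)"

lemma cshift_eq_rotate: "cshift u = rotate (length u - 1) u"
proof (cases "u = []")
  case False
  then have "rotate (length u - 1) (butlast u @ [last u]) = [last u] @ butlast u"
    using rotate_append[of "butlast u" "[last u]"] by simp
  then show ?thesis using False by (simp add: cshift_def append_butlast_last_id)
qed (simp add: cshift_def)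

lemma (in abelian_monoid) finsum_swap:
  assumes "finite A" "finite B" "\<And>i j. i \<in> A \<Longrightarrow> j \<in> B \<Longrightarrow> f i j \<in> carrier G"
  shows "(\<Oplus>i\<in>A. \<Oplus>j\<in>B. f i j) = (\<Oplus>j\<in>B. \<Oplus>i\<in>A. f i j)"
  using assms
proof (induct A rule: finite_induct)
  case (insert x A)
  have "(\<Oplus>i\<in>insert x A. \<Oplus>j\<in>B. f i j) = (\<Oplus>j\<in>B. f x j) \<oplus> (\<Oplus>i\<in>A. \<Oplus>j\<in>B. f i j)"
    using insert by (intro finsum_insert) (auto intro!: finsum_closed)
  also have "\<dots> = (\<Oplus>j\<in>B. f x j) \<oplus> (\<Oplus>j\<in>B. \<Oplus>i\<in>A. f i j)"
    using insert by simp
  also have "\<dots> = (\<Oplus>j\<in>B. f x j \<oplus> (\<Oplus>i\<in>A. f i j))"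
    using insert by (intro finsum_addf[symmetric]) (auto intro!: finsum_closed)
  also have "\<dots> = (\<Oplus>j\<in>B. \<Oplus>i\<in>insert x A. f i j)"
    using insert by (intro finsum_cong) (auto intro!: finsum_closed simp: finsum_insert)
  finally show ?case .
qed (simp add: finsum_zero)

lemma (in abelian_monoid) finsum_rotate:
  fixes n j :: nat
  assumes "j < n" "f \<in> {..<n} \<rightarrow> carrier G"
  shows "(\<Oplus>s\<in>{..<n}. f ((j + s) mod n)) = (\<Oplus>i\<in>{..<n}. f i)"
proof -
  have inj: "inj_on (\<lambda>s. (j + s) mod n) {..<n}"
  proof
    fix x y assume xy: "x \<in> {..<n}" "y \<in> {..<n}" "(j + x) mod n = (j + y) mod n"
    have "((j + z) mod n + (n - j)) mod n = z" if "z < n" for z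
    proof -
      have "((j + z) mod n + (n - j)) mod n = (j + z + (n - j)) mod n"
        by (simp add: mod_add_left_eq)
      then show ?thesis using that \<open>j < n\<close> by simp
    qed
    then show "x = y" using xy by (metis lessThan_iff)
  qed
  then have "(\<lambda>s. (j + s) mod n) ` {..<n} = {..<n}"
    using \<open>j < n\<close> by (intro endo_inj_surj) auto
  then show ?thesis
    using finsum_reindex[OF _ inj, of f] assms(2) by (simp add: comp_def)
qed

context cring
begin

lemma lin_code_memD:
  "lin_code R n C \<Longrightarrow> u \<in> C \<Longrightarrow> length u = n \<and> set u \<subseteq> carrier R"
  by (auto simp: lin_code_def vecs_def)

lemma lin_code_zero:
  assumes "lin_code R n C"
  shows "replicate n \<zero> \<in> C"
proof -
  obtain u where u: "u \<in> C" using assms by (auto simp: lin_code_def)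
  then have "vsmult R \<zero> u \<in> C" using assms by (auto simp: lin_code_def)
  moreover have "vsmult R \<zero> u = map (\<lambda>_. \<zero>) u"
    unfolding vsmult_def using lin_code_memD[OF assms u] by (intro map_cong) auto
  ultimately show ?thesis using lin_code_memD[OF assms u] by (simp add: map_replicate_const)
qed

lemma coord_sum_closed: "set u \<subseteq> carrier R \<Longrightarrow> length u = n \<Longrightarrow> coord_sum R n u \<in> carrier R"
  by (auto simp: coord_sum_def intro!: finsum_closed)

lemma coord_sum_replicate: "a \<in> carrier R \<Longrightarrow> coord_sum R n (replicate n a) = add_pow R n a"
  using add.finprod_const[of a "{..<n}"] by (simp add: coord_sum_def cong: finsum_cong)

lemma inner_replicate_right:
  assumes "length v = n" "set v \<subseteq> carrier R" "a \<in> carrier R"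
  shows "inner R n v (replicate n a) = coord_sum R n v \<otimes> a"
proof -
  have v: "v ! j \<in> carrier R" if "j < n" for j using assms that by auto
  have "inner R n v (replicate n a) = (\<Oplus>j\<in>{..<n}. v ! j \<otimes> a)"
    unfolding inner_def by (rule finsum_cong) (use assms v in auto)
  also have "\<dots> = coord_sum R n v \<otimes> a"
    unfolding coord_sum_def by (rule finsum_ldistr[symmetric]) (use assms v in auto)
  finally show ?thesis .
qed

lemma replicate_mem_dual_code_iff:
  assumes "lin_code R n C" "a \<in> carrier R"
  shows "replicate n a \<in> dual_code R n C \<longleftrightarrow> (\<forall>v\<in>C. coord_sum R n v \<otimes> a = \<zero>)"
  using assms inner_replicate_right lin_code_memD[OF assms(1)]
  by (auto simp: dual_code_def vecs_def)

lemma cyclic_code_rotate: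
  assumes "cyclic_code R n C" "u \<in> C"
  shows "rotate k u \<in> C"
proof -
  have lin: "lin_code R n C" using assms(1) by (simp add: cyclic_code_def)
  have len: "length u = n" using lin_code_memD[OF lin assms(2)] by simp
  have shift: "rotate (n - 1) v \<in> C" if "v \<in> C" for v
  proof -
    have "length v = n" using lin_code_memD[OF lin that] by simp
    then show ?thesis using cshift_eq_rotate[of v] assms(1) that by (auto simp: cyclic_code_def)
  qed
  have shifts: "rotate (j * (n - 1)) u \<in> C" for j
  proof (induct j)
    case (Suc j)
    then show ?case using shift[OF Suc] by (simp add: rotate_rotate add.commute)
  qed (simp add: assms(2))
  show ?thesis
  proof (cases "n \<le> 1")
    case True
    then have "rotate k u = u" using len by (auto simp: le_Suc_eq length_Suc_conv)
    then show ?thesis using assms(2) by simp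
  next
    case False
    then obtain l where "n = 2 + l" using le_Suc_ex[of 2 n] by auto
    \<comment> \<open>\<open>(n - 1)\<^sup>2 \<equiv> 1 (mod n)\<close>, so \<open>k (n - 1)\<close> backward shifts amount to \<open>k\<close> forward ones\<close>
    then have "k * (n - 1) * (n - 1) = k + n * (k * l)" by (simp add: algebra_simps)
    then have "rotate (k * (n - 1) * (n - 1)) u = rotate k u"
      using rotate_conv_mod[of "k * (n - 1) * (n - 1)" u] rotate_conv_mod[of k u] len by simp
    then show ?thesis using shifts[of "k * (n - 1)"] by simp
  qed
qed

lemma cyclic_code_replicate_coord_sum:
  assumes cyc: "cyclic_code R n C" and u: "u \<in> C"
  shows "replicate n (coord_sum R n u) \<in> C"
proof -
  have lin: "lin_code R n C" using cyc by (simp add: cyclic_code_def)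
  have len: "length u = n" and carr: "set u \<subseteq> carrier R" using lin_code_memD[OF lin u] by auto
  \<comment> \<open>\<open>P k\<close> is the sum of the first \<open>k\<close> rotations of \<open>u\<close>\<close>
  define P where "P k = map (\<lambda>j. \<Oplus>s\<in>{..<k}. u ! ((j + s) mod n)) [0..<n]" for k
  have P_mem: "P k \<in> C" for k
  proof (induct k)
    case 0
    then show ?case using lin_code_zero[OF lin] by (simp add: P_def map_replicate_const)
  next
    case (Suc k)
    have "P (Suc k) ! j = (P k ! j) \<oplus> (rotate k u ! j)" if "j < n" for j
    proof -
      have "u ! ((j + s) mod n) \<in> carrier R" for s
      proof -
        have "(j + s) mod n < length u" using that len by simp
        then show ?thesis using carr nth_mem by blast
      qed
      then show ?thesis
        using that len
        by (simp add: P_def finsum_insert lessThan_Suc nth_rotate add.commute[of k j] Pi_def a_comm)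
    qed
    then have "P (Suc k) = vadd R (P k) (rotate k u)"
      using len by (auto simp: P_def vadd_def intro!: nth_equalityI)
    then show ?case
      using Suc cyclic_code_rotate[OF cyc u] lin by (simp add: lin_code_def)
  qed
  have "P n = replicate n (coord_sum R n u)"
  proof -
    have "(!) u \<in> {..<n} \<rightarrow> carrier R" using len carr by auto
    then show ?thesis
      using len finsum_rotate[of _ n "(!) u"] by (auto simp: P_def coord_sum_def intro!: nth_equalityI)
  qed
  then show ?thesis using P_mem[of n] by simp
qed

end

section \<open>Free codes\<close>

lemma lincomb_nth: "j < n \<Longrightarrow> lincomb S n f B ! j = (\<Oplus>\<^bsub>S\<^esub> b\<in>B. f b \<otimes>\<^bsub>S\<^esub> b ! j)"
  by (simp add: lincomb_def)

lemma length_lincomb [simp]: "length (lincomb S n f B) = n"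
  by (simp add: lincomb_def)

lemma (in ring_hom_cring) hom_coord_sum:
  assumes "set u \<subseteq> carrier R" "length u = n"
  shows "h (coord_sum R n u) = coord_sum S n (map h u)"
proof -
  have u: "u ! j \<in> carrier R" if "j < n" for j using assms that by auto
  then show ?thesis unfolding coord_sum_def
    by (subst hom_finsum) (auto intro!: S.finsum_cong simp: assms(2))
qed

context cring
begin

lemma vecs_nth_closed:
  assumes "B \<subseteq> vecs R n" "b \<in> B" "j < n"
  shows "b ! j \<in> carrier R"
proof -
  have "length b = n" "set b \<subseteq> carrier R" using assms(1,2) by (auto simp: vecs_def)
  then show ?thesis using assms(3) nth_mem by blast
qed

lemma lincomb_zero_coeffs:
  assumes "B \<subseteq> vecs R n"
  shows "lincomb R n (\<lambda>b\<in>B. \<zero>) B = replicate n \<zero>"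
proof (rule nth_equalityI)
  fix j assume "j < length (lincomb R n (\<lambda>b\<in>B. \<zero>) B)"
  then have "j < n" by simp
  then show "lincomb R n (\<lambda>b\<in>B. \<zero>) B ! j = replicate n \<zero> ! j"
    using vecs_nth_closed[OF assms] by (simp add: lincomb_nth finsum_zero cong: finsum_cong)
qed simp

lemma lincomb_scale_coeffs:
  assumes "finite B" "B \<subseteq> vecs R n" "f \<in> B \<rightarrow> carrier R" "s \<in> carrier R"
  shows "lincomb R n (\<lambda>b\<in>B. s \<otimes> f b) B = vsmult R s (lincomb R n f B)"
proof (rule nth_equalityI)
  fix j assume "j < length (lincomb R n (\<lambda>b\<in>B. s \<otimes> f b) B)"
  then have j: "j < n" by simp
  have Bj: "b ! j \<in> carrier R" if "b \<in> B" for b using vecs_nth_closed[OF assms(2) that j] .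
  have fB: "f b \<in> carrier R" if "b \<in> B" for b using assms(3) that by blast
  have "(\<Oplus>b\<in>B. (\<lambda>b\<in>B. s \<otimes> f b) b \<otimes> b ! j) = (\<Oplus>b\<in>B. s \<otimes> (f b \<otimes> b ! j))"
    using assms(4) Bj fB by (intro finsum_cong) (auto simp: m_assoc)
  also have "\<dots> = s \<otimes> (\<Oplus>b\<in>B. f b \<otimes> b ! j)"
    using assms(1,4) Bj fB by (intro finsum_rdistr[symmetric]) auto
  finally show "lincomb R n (\<lambda>b\<in>B. s \<otimes> f b) B ! j = vsmult R s (lincomb R n f B) ! j"
    using j by (simp add: lincomb_nth vsmult_def)
qed (simp add: vsmult_def)

lemma coord_sum_lincomb:
  assumes "finite B" "B \<subseteq> vecs R n" "f \<in> B \<rightarrow> carrier R"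
  shows "coord_sum R n (lincomb R n f B) = (\<Oplus>b\<in>B. f b \<otimes> coord_sum R n b)"
proof -
  have Bj: "b ! j \<in> carrier R" if "b \<in> B" "j < n" for b j using vecs_nth_closed[OF assms(2) that] .
  have fB: "f b \<in> carrier R" if "b \<in> B" for b using assms(3) that by blast
  have "coord_sum R n (lincomb R n f B) = (\<Oplus>j\<in>{..<n}. \<Oplus>b\<in>B. f b \<otimes> b ! j)"
    unfolding coord_sum_def using Bj fB
    by (intro finsum_cong) (auto simp: lincomb_nth intro!: finsum_closed)
  also have "\<dots> = (\<Oplus>b\<in>B. \<Oplus>j\<in>{..<n}. f b \<otimes> b ! j)"
    using assms(1) Bj fB by (intro finsum_swap) auto
  also have "\<dots> = (\<Oplus>b\<in>B. f b \<otimes> coord_sum R n b)"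
    unfolding coord_sum_def using Bj fB
    by (intro finsum_cong) (simp_all add: finsum_rdistr Pi_def)
  finally show ?thesis .
qed

lemma basis_coeffs_annihilated:
  assumes basis: "\<forall>v\<in>M. \<exists>!f. f \<in> B \<rightarrow>\<^sub>E carrier R \<and> v = lincomb R n f B"
    and B: "finite B" "B \<subseteq> vecs R n" and zero: "replicate n \<zero> \<in> M"
    and f: "f \<in> B \<rightarrow>\<^sub>E carrier R" and s: "s \<in> carrier R"
    and ann: "vsmult R s (lincomb R n f B) = replicate n \<zero>" and b: "b \<in> B"
  shows "s \<otimes> f b = \<zero>"
proof -
  have "f \<in> B \<rightarrow> carrier R" using f by (auto simp: PiE_iff)
  then have scaled: "(\<lambda>b\<in>B. s \<otimes> f b) \<in> B \<rightarrow>\<^sub>E carrier R \<and>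
      replicate n \<zero> = lincomb R n (\<lambda>b\<in>B. s \<otimes> f b) B"
    using lincomb_scale_coeffs[OF B _ s] ann s by auto
  have trivial: "(\<lambda>b\<in>B. \<zero>) \<in> B \<rightarrow>\<^sub>E carrier R \<and> replicate n \<zero> = lincomb R n (\<lambda>b\<in>B. \<zero>) B"
    using lincomb_zero_coeffs[OF B(2)] by simp
  have "(\<lambda>b\<in>B. s \<otimes> f b) = (\<lambda>b\<in>B. \<zero>)"
    using bspec[OF basis zero] scaled trivial by blast
  then show ?thesis using b by (metis restrict_apply')
qed

end

section \<open>Self-dual cyclic codes\<close>

context cring
begin

lemma add_pow_mem_ideal_of_free_quotient_code:
  assumes lin: "lin_code R n C" and I: "ideal I R"
    and free: "free_code (R Quot I) n (psi R I ` C)"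
    and a: "a \<in> carrier R" "replicate n a \<in> C"
    and ann: "\<forall>v\<in>C. coord_sum R n v \<otimes> a = \<zero>"
  shows "add_pow R n a \<in> I"
proof -
  interpret I: ideal I R by fact
  define S where "S = R Quot I"
  define h where "h = (+>) I"
  interpret S: cring S unfolding S_def by (rule I.quotient_is_cring[OF is_cring])
  interpret H: ring_hom_cring R S h unfolding S_def h_def by (rule I.rcos_ring_hom_cring[OF is_cring])
  have psi: "psi R I u = map h u" for u by (simp add: psi_def h_def)
  obtain B where B: "finite B" "B \<subseteq> psi R I ` C"
    and basis: "\<forall>v\<in>psi R I ` C. \<exists>!f. f \<in> B \<rightarrow>\<^sub>E carrier S \<and> v = lincomb S n f B"
    using free unfolding free_code_def S_def by blast
  have "map h u \<in> vecs S n" if "u \<in> C" for u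
    using lin_code_memD[OF lin that] by (auto simp: vecs_def)
  then have B_vecs: "B \<subseteq> vecs S n" using B(2) psi by auto
  have "map h (replicate n \<zero>) \<in> psi R I ` C" using lin_code_zero[OF lin] psi by (metis image_eqI)
  then have zero: "replicate n \<zero>\<^bsub>S\<^esub> \<in> psi R I ` C" by simp
  have "map h (replicate n a) \<in> psi R I ` C" using a(2) psi by (metis image_eqI)
  then obtain f where f: "f \<in> B \<rightarrow>\<^sub>E carrier S" and w: "replicate n (h a) = lincomb S n f B"
    using basis by force
  have "f b \<otimes>\<^bsub>S\<^esub> coord_sum S n b = \<zero>\<^bsub>S\<^esub>" if b: "b \<in> B" for b
  proof -
    obtain u where u: "u \<in> C" "b = map h u" using B(2) b psi by auto
    have u_vec: "length u = n" "set u \<subseteq> carrier R" using lin_code_memD[OF lin u(1)] by auto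
    then have s: "coord_sum S n b = h (coord_sum R n u)" using H.hom_coord_sum u(2) by simp
    have s_closed: "coord_sum S n b \<in> carrier S" using s coord_sum_closed[OF u_vec(2,1)] by simp
    have "coord_sum S n b \<otimes>\<^bsub>S\<^esub> h a = \<zero>\<^bsub>S\<^esub>"
      using s ann u(1) a(1) coord_sum_closed[OF u_vec(2,1)] by (simp flip: H.hom_mult)
    then have "vsmult S (coord_sum S n b) (lincomb S n f B) = replicate n \<zero>\<^bsub>S\<^esub>"
      by (simp flip: w add: vsmult_def)
    then have "coord_sum S n b \<otimes>\<^bsub>S\<^esub> f b = \<zero>\<^bsub>S\<^esub>"
      using S.basis_coeffs_annihilated[OF basis B(1) B_vecs zero f s_closed _ b] by blast
    then show ?thesis using s_closed f b S.m_comm by (metis PiE_mem)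
  qed
  then have "coord_sum S n (lincomb S n f B) = \<zero>\<^bsub>S\<^esub>"
    using S.coord_sum_lincomb[OF B(1) B_vecs] f by (simp add: PiE_iff cong: S.finsum_cong)
  moreover have "h (add_pow R n a) = coord_sum S n (lincomb S n f B)"
  proof -
    have "set (replicate n a) \<subseteq> carrier R" using a(1) by (simp add: set_replicate_conv_if)
    then show ?thesis
      using H.hom_coord_sum[of "replicate n a" n] a(1) by (simp flip: w add: coord_sum_replicate)
  qed
  ultimately have "I +> add_pow R n a = I" by (simp add: h_def S_def FactRing_def)
  then show ?thesis using a(1) I.rcos_const_imp_mem by simp
qed

lemma self_dual_add_pow_mem_ideal:
  assumes lin: "lin_code R n C" and self_dual: "C = dual_code R n C" and I: "ideal I R"
    and free: "free_code (R Quot I) n (psi R I ` C)"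
    and a: "a \<in> carrier R" and ann: "\<forall>v\<in>C. coord_sum R n v \<otimes> a = \<zero>"
  shows "add_pow R n a \<in> I"
proof -
  have "replicate n a \<in> C"
    using replicate_mem_dual_code_iff[OF lin a] ann self_dual by simp
  then show ?thesis using add_pow_mem_ideal_of_free_quotient_code[OF lin I free a _ ann] by simp
qed

lemma cyclic_code_with_free_component_not_self_dual:
  assumes fin: "finite (carrier R)" and pir: "\<forall>J. ideal J R \<longrightarrow> principalideal J R"
    and cop: "coprime n (card (carrier (R Quot m)))"
    and cyc: "cyclic_code R n C" and max: "maximalideal m R"
    and free: "free_code (R Quot (ideal_pow R m (stab_index R m))) n (component R m C)"
  shows "C \<noteq> dual_code R n C"
proof
  assume self_dual: "C = dual_code R n C"
  have lin: "lin_code R n C" using cyc by (simp add: cyclic_code_def)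
  have m: "ideal m R" using max by (rule maximalideal.axioms(1))
  define I where "I = ideal_pow R m (stab_index R m)"
  have I: "ideal I R" unfolding I_def using m by (rule ideal_ideal_pow)
  have I_sub: "I \<subseteq> m" unfolding I_def using ideal_pow_subset[OF m stab_index_pos[OF fin max]] .
  have "principalideal I R" using pir I by blast
  moreover have "I = I \<cdot> I" unfolding I_def by (rule ideal_pow_stab_index_idem[OF fin m])
  ultimately obtain e where e: "e \<in> I" and unit: "\<And>x. x \<in> I \<Longrightarrow> x \<otimes> e = x"
    using idempotent_principalideal_has_unit by blast
  have e_closed: "e \<in> carrier R" using ideal.Icarr[OF I e] .
  define N where "N = add_pow R n \<one>"
  have N_closed: "N \<in> carrier R" by (simp add: N_def)
  have N_mem: "N \<otimes> a \<in> I" if "a \<in> carrier R" "\<forall>v\<in>C. coord_sum R n v \<otimes> a = \<zero>" for a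
    using self_dual_add_pow_mem_ideal[OF lin self_dual I _ that] free
      add_pow_ldistr[of \<one> a n] that(1)
    by (simp add: I_def component_def N_def)
  define x where "x = N \<otimes> (\<one> \<ominus> e)"
  have "coord_sum R n v \<otimes> x = \<zero>" if v: "v \<in> C" for v
  proof -
    define c where "c = coord_sum R n v"
    have c_closed: "c \<in> carrier R"
      using coord_sum_closed lin_code_memD[OF lin v] by (simp add: c_def)
    have "replicate n c \<in> dual_code R n C"
      unfolding c_def using cyclic_code_replicate_coord_sum[OF cyc v] self_dual by simp
    then have "N \<otimes> c \<in> I"
      using N_mem replicate_mem_dual_code_iff[OF lin c_closed] c_closed by blast
    then have "(N \<otimes> c) \<otimes> e = N \<otimes> c" by (rule unit)
    then show ?thesis
      using c_closed N_closed e_closed unfolding c_def[symmetric] x_def by algebra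
  qed
  then have "N \<otimes> x \<in> I" using N_mem N_closed e_closed by (simp add: x_def)
  moreover have "(N \<otimes> N) \<otimes> e \<in> I" using e N_closed I by (simp add: ideal.I_l_closed)
  ultimately have "N \<otimes> x \<oplus> (N \<otimes> N) \<otimes> e \<in> I"
    using additive_subgroup.a_closed[OF ideal.axioms(1)[OF I]] by blast
  moreover have "N \<otimes> x = N \<otimes> N \<ominus> (N \<otimes> N) \<otimes> e"
    using N_closed e_closed unfolding x_def by (simp add: a_minus_def r_distr r_minus m_assoc)
  then have "N \<otimes> x \<oplus> (N \<otimes> N) \<otimes> e = N \<otimes> N"
    using N_closed e_closed by (simp add: a_minus_def a_assoc l_neg)
  ultimately have "N \<otimes> N \<in> m" using I_sub by auto
  then have "N \<in> m" using primeideal.I_prime[OF maximalideal_prime[OF max]] N_closed by blast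
  then show False using add_pow_one_notin_maximalideal[OF fin max cop] by (simp add: N_def)
qed

end

theorem mainTheorem15:
  fixes R :: "('a, 'b) ring_scheme" and n :: nat and C :: "'a list set" and m :: "'a set"
  assumes "finite_cpir R"
    and "n > 0"
    and "\<forall>M. maximalideal M R \<longrightarrow> coprime n (card (carrier (R Quot M)))"
    and "cyclic_code R n C"
    and "maximalideal m R"
    and "odd (card (carrier (R Quot m)))"
    and "free_code (R Quot (ideal_pow R m (stab_index R m))) n (component R m C)"
  shows "C \<noteq> dual_code R n C"
  using cring.cyclic_code_with_free_component_not_self_dual[of R n m C] assms
  by (simp add: finite_cpir_def)

end
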